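(* $\Delta[\Delta,\Delta]\Delta+\mathbb F1=\langle A,B\rangle\cap\langle B,C\rangle\cap\langle A,C\rangle$.
   Context: Let $\mathbb F$ be a field and fix a nonzero $q\in\mathbb F$ with $q^4\neq 1$. The universal Askey--Wilson algebra $\Delta$ is the associative $\mathbb F$-algebra with 1 with generators $A,B,C$ subject to the relations that each of $A+\frac{qBC-q^{-1}CB}{q^2-q^{-2}}$, $B+\frac{qCA-q^{-1}AC}{q^2-q^{-2}}$, $C+\frac{qAB-q^{-1}BA}{q^2-q^{-2}}$ is central. $[\Delta,\Delta]={\rm Span}\{uv-vu:u,v\in\Delta\}$, so $\Delta[\Delta,\Delta]\Delta$ is the 2-sided ideal generated by it. For $\mathcal S\subseteq\Delta$, $\langle\mathcal S\rangle$ denotes the $\mathbb F$-subalgebra of $\Delta$ generated by $\mathcal S$. *)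

theory Defs
  imports Main "HOL-Library.Poly_Mapping"
begin

datatype gen = GA | GB | GC

datatype word = W "gen list"

instantiation word :: monoid_add
begin
fun plus_word :: "word \<Rightarrow> word \<Rightarrow> word" where
  "plus_word (W xs) (W ys) = W (xs @ ys)"
definition zero_word :: word where "zero_word = W []"
instance
proof
  fix a b c :: word
  show "a + b + c = a + (b + c)" by (cases a; cases b; cases c) simp
  show "0 + a = a" by (cases a) (simp add: zero_word_def)
  show "a + 0 = a" by (cases a) (simp add: zero_word_def)
qed
end

text \<open>The free associative unital \<open>'k\<close>-algebra \<open>\<FF>\<langle>A,B,C\<rangle>\<close>: finitely supported
  functions from words to \<open>'k\<close>, with convolution product.\<close>
type_synonym 'k freealg = "word \<Rightarrow>\<^sub>0 'k"

definition sc :: "'k::field \<Rightarrow> 'k freealg" where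
  "sc c = Poly_Mapping.single 0 c"

definition genA :: "'k::field freealg" where "genA = Poly_Mapping.single (W [GA]) 1"
definition genB :: "'k::field freealg" where "genB = Poly_Mapping.single (W [GB]) 1"
definition genC :: "'k::field freealg" where "genC = Poly_Mapping.single (W [GC]) 1"

text \<open>Two-sided ideal generated by \<open>S\<close> (in a unital algebra this is also the
  algebra ideal, since scalars are elements of the ring).\<close>
inductive_set ideal_gen :: "'a::ring_1 set \<Rightarrow> 'a set" for S where
  base: "x \<in> S \<Longrightarrow> x \<in> ideal_gen S"
| zero: "0 \<in> ideal_gen S"
| add: "x \<in> ideal_gen S \<Longrightarrow> y \<in> ideal_gen S \<Longrightarrow> x + y \<in> ideal_gen S"
| lmult: "x \<in> ideal_gen S \<Longrightarrow> r * x \<in> ideal_gen S"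
| rmult: "x \<in> ideal_gen S \<Longrightarrow> x * r \<in> ideal_gen S"

inductive_set subalg_gen :: "'k::field freealg set \<Rightarrow> 'k freealg set" for S where
  base: "x \<in> S \<Longrightarrow> x \<in> subalg_gen S"
| scal: "sc c \<in> subalg_gen S"
| add: "x \<in> subalg_gen S \<Longrightarrow> y \<in> subalg_gen S \<Longrightarrow> x + y \<in> subalg_gen S"
| mult: "x \<in> subalg_gen S \<Longrightarrow> y \<in> subalg_gen S \<Longrightarrow> x * y \<in> subalg_gen S"

definition awA :: "'k::field \<Rightarrow> 'k freealg" where
  "awA q = genA + sc (q / (q^2 - inverse (q^2))) * genB * genC
                - sc (inverse q / (q^2 - inverse (q^2))) * genC * genB"
definition awB :: "'k::field \<Rightarrow> 'k freealg" where
  "awB q = genB + sc (q / (q^2 - inverse (q^2))) * genC * genA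
                - sc (inverse q / (q^2 - inverse (q^2))) * genA * genC"
definition awC :: "'k::field \<Rightarrow> 'k freealg" where
  "awC q = genC + sc (q / (q^2 - inverse (q^2))) * genA * genB
                - sc (inverse q / (q^2 - inverse (q^2))) * genB * genA"

text \<open>Defining ideal of \<open>\<Delta>\<close>: it is generated by all \<open>\<alpha> x - x \<alpha>\<close>, where \<open>\<alpha>\<close> is one of the three
  elements required to be central and \<open>x\<close> ranges over the free algebra.
  Then \<open>\<Delta> = freealg / AW_ideal q\<close>.\<close>
definition AW_ideal :: "'k::field \<Rightarrow> 'k freealg set" where
  "AW_ideal q = ideal_gen {a * x - x * a | a x. a \<in> {awA q, awB q, awC q}}"

text \<open>Preimage in the free algebra, under the quotient map \<open>\<pi>\<close>, of the image \<open>\<pi>(X)\<close>: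
  i.e. \<open>X + AW_ideal q\<close>.  Subsets of \<open>\<Delta>\<close> are represented by their (full) preimages
  in the free algebra; two subsets of \<open>\<Delta>\<close> are equal iff their preimages are.\<close>
definition lift :: "'k::field \<Rightarrow> 'k freealg set \<Rightarrow> 'k freealg set" where
  "lift q X = {x + i | x i. x \<in> X \<and> i \<in> AW_ideal q}"

text \<open>Preimage of \<open>\<Delta>[\<Delta>,\<Delta>]\<Delta> + \<FF>1\<close>: since \<open>\<pi>\<close> is surjective, \<open>\<Delta>[\<Delta>,\<Delta>]\<Delta>\<close> is the image
  of the two-sided ideal of the free algebra generated by all commutators.\<close>
definition comm_ideal_plus_scalars :: "'k::field \<Rightarrow> 'k freealg set" where
  "comm_ideal_plus_scalars q =
     lift q {j + sc c | j c. j \<in> ideal_gen {u * v - v * u | u v :: 'k freealg. True}}"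

end

theory Submission
  imports Defs "HOL-Library.Multiset"
begin

text \<open>
  For the inclusion \<open>\<subseteq>\<close> consider, say, \<open>\<langle>A,B\<rangle>\<close>.  Since \<open>q\<^sup>4 \<noteq> 1\<close> the two coefficients
  \<open>a = q/(q\<^sup>2-q\<^sup>-\<^sup>2)\<close> and \<open>b = q\<^sup>-\<^sup>1/(q\<^sup>2-q\<^sup>-\<^sup>2)\<close> differ, and expanding the commutators of the
  central elements \<open>C + aAB - bBA\<close> and \<open>A + aBC - bCB\<close> with \<open>A\<close> and \<open>B\<close> shows that
  \<open>(a-b)\<cdot>[A,B]C\<close> lies in \<open>M\<close>, the ideal of \<open>\<langle>A,B\<rangle>\<close> generated by \<open>[A,B]\<close>.  Consequently
  \<open>M\<close> is closed under multiplication by \<open>C\<close>, hence is an ideal of all of \<open>\<Delta>\<close>; as it contains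
  all commutators of generators, \<open>\<Delta>[\<Delta>,\<Delta>]\<Delta> \<subseteq> M \<subseteq> \<langle>A,B\<rangle>\<close>.

  For \<open>\<supseteq>\<close>, abelianize: the map to commutative polynomials kills the commutator ideal of
  the free algebra, which contains the defining ideal of \<open>\<Delta>\<close>.  An element of \<open>\<langle>A,B\<rangle>\<close>
  therefore has an abelianization without monomials involving \<open>C\<close>, so an element of all
  three subalgebras has constant abelianization \<open>c\<close>.  Reordering every word into sorted
  order changes an element only by the commutator ideal, and the sorted form of the element
  is determined by its abelianization, namely \<open>c\<close>.
\<close>

lemma poly_mapping_single_induct [case_names zero single add]:
  fixes x :: "'a \<Rightarrow>\<^sub>0 'b::comm_monoid_add"
  assumes "P 0" "\<And>w c. P (Poly_Mapping.single w c)" "\<And>x y. P x \<Longrightarrow> P y \<Longrightarrow> P (x + y)"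
  shows "P x"
proof (induct x rule: update_induct)
  case const then show ?case using assms by simp
next
  case (update f a b)
  have "Poly_Mapping.update a b f = f + Poly_Mapping.single a b"
    using update(1)
    by (intro poly_mapping_eqI) (auto simp: lookup_update lookup_add lookup_single in_keys_iff when_def)
  then show ?case using update assms by simp
qed

lemma sc_commute: "sc c * x = x * (sc c :: 'k::field freealg)"
  unfolding sc_def
  by (induct x rule: poly_mapping_single_induct)
    (simp_all add: mult_single distrib_left distrib_right mult.commute)

lemma sc_mult_sc: "sc c * (sc d * x) = sc (c * d) * (x :: 'k::field freealg)"
  unfolding sc_def by (simp add: mult_single flip: mult.assoc)

lemma mult_sc_left_commute: "x * (sc c * y) = sc c * (x * (y :: 'k::field freealg))"
  by (metis mult.assoc sc_commute)

lemma sc_0 [simp]: "sc 0 = (0 :: 'k::field freealg)"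
  and sc_1 [simp]: "sc 1 = (1 :: 'k::field freealg)"
  unfolding sc_def by simp_all

lemma sc_diff: "sc (c - d) = sc c - (sc d :: 'k::field freealg)"
  unfolding sc_def by (simp add: single_diff)

definition word_monom :: "gen list \<Rightarrow> 'k::field freealg" where
  "word_monom l = Poly_Mapping.single (W l) 1"

lemma word_monom_Nil: "word_monom [] = 1"
  unfolding word_monom_def by (simp flip: zero_word_def)

lemma word_monom_Cons: "word_monom (g # l) = word_monom [g] * word_monom l"
  unfolding word_monom_def by (simp add: mult_single)

lemma single_W_eq: "Poly_Mapping.single (W l) c = sc c * word_monom l"
  unfolding word_monom_def sc_def by (simp add: mult_single)

abbreviation comm_ideal :: "'a::ring_1 set" where
  "comm_ideal \<equiv> ideal_gen {u * v - v * u | u v. True}"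

lemma ideal_gen_uminus: "x \<in> ideal_gen S \<Longrightarrow> - x \<in> ideal_gen S"
  using ideal_gen.lmult[of x S "-1"] by simp

lemma ideal_gen_mono:
  assumes "S \<subseteq> T"
  shows "ideal_gen S \<subseteq> ideal_gen T"
proof
  fix x assume "x \<in> ideal_gen S"
  then show "x \<in> ideal_gen T"
    by induct (use assms in \<open>auto intro: ideal_gen.intros\<close>)
qed

lemma subalg_gen_zero: "0 \<in> subalg_gen S"
  using subalg_gen.scal[of 0] by simp

lemma subalg_gen_minus_one: "-1 \<in> subalg_gen S"
  using subalg_gen.scal[of "-1"] by (simp add: sc_def single_uminus)

lemma subalg_gen_diff: "x \<in> subalg_gen S \<Longrightarrow> y \<in> subalg_gen S \<Longrightarrow> x - y \<in> subalg_gen S"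
  using subalg_gen.add[OF _ subalg_gen.mult[OF subalg_gen_minus_one], of x S y] by simp

lemma subalg_gen_genA_genB_genC: "x \<in> subalg_gen {genA, genB, genC}"
proof -
  have monom: "word_monom l \<in> subalg_gen {genA, genB, genC}" for l
  proof (induct l)
    case Nil then show ?case using subalg_gen.scal[of 1] by (simp add: word_monom_Nil)
  next
    case (Cons g l)
    have "word_monom [g] \<in> subalg_gen {genA, genB, genC}"
      by (cases g) (auto simp: word_monom_def genA_def genB_def genC_def intro: subalg_gen.base)
    then show ?case using Cons by (subst word_monom_Cons) (rule subalg_gen.mult)
  qed
  show ?thesis
  proof (induct x rule: poly_mapping_single_induct)
    case zero then show ?case by (rule subalg_gen_zero)
  next
    case (single w c)
    then show ?case by (cases w) (simp add: single_W_eq subalg_gen.mult subalg_gen.scal monom)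
  next
    case (add x y) then show ?case by (rule subalg_gen.add)
  qed
qed

lemma subalg_gen_mult_left_closed:
  fixes K :: "'k::field freealg set"
  assumes "u \<in> subalg_gen S" "x \<in> K"
    and "\<And>g x. g \<in> S \<Longrightarrow> x \<in> K \<Longrightarrow> g * x \<in> K"
    and "\<And>c x. x \<in> K \<Longrightarrow> sc c * x \<in> K"
    and "\<And>x y. x \<in> K \<Longrightarrow> y \<in> K \<Longrightarrow> x + y \<in> K"
  shows "u * x \<in> K"
  using assms(1,2) by (induct u arbitrary: x rule: subalg_gen.induct)
    (simp_all add: assms(3-5) distrib_right mult.assoc)

lemma subalg_gen_mult_right_closed:
  fixes K :: "'k::field freealg set"
  assumes "u \<in> subalg_gen S" "x \<in> K"
    and "\<And>g x. g \<in> S \<Longrightarrow> x \<in> K \<Longrightarrow> x * g \<in> K"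
    and "\<And>c x. x \<in> K \<Longrightarrow> x * sc c \<in> K"
    and "\<And>x y. x \<in> K \<Longrightarrow> y \<in> K \<Longrightarrow> x + y \<in> K"
  shows "x * u \<in> K"
  using assms(1,2) by (induct u arbitrary: x rule: subalg_gen.induct)
    (simp_all add: assms(3-5) distrib_left flip: mult.assoc)

lemma subalg_gen_commutator:
  fixes K :: "'k::field freealg set"
  assumes u: "u \<in> subalg_gen S" and v: "v \<in> subalg_gen S"
    and gens: "\<And>g h. g \<in> S \<Longrightarrow> h \<in> S \<Longrightarrow> g * h - h * g \<in> K"
    and zero: "0 \<in> K" and closed_add: "\<And>x y. x \<in> K \<Longrightarrow> y \<in> K \<Longrightarrow> x + y \<in> K"
    and closed_uminus: "\<And>x. x \<in> K \<Longrightarrow> - x \<in> K"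
    and closed_mult: "\<And>s x. s \<in> subalg_gen S \<Longrightarrow> x \<in> K \<Longrightarrow> s * x \<in> K \<and> x * s \<in> K"
  shows "u * v - v * u \<in> K"
proof -
  have gen_case: "u * v - v * u \<in> K"
    if "u \<in> subalg_gen S" and v_gens: "\<And>g. g \<in> S \<Longrightarrow> g * v - v * g \<in> K" for u v
    using that(1)
  proof (induct u rule: subalg_gen.induct)
    case (base g) then show ?case by (rule v_gens)
  next
    case (scal c) then show ?case using zero by (simp add: sc_commute)
  next
    case (add x y)
    have "(x + y) * v - v * (x + y) = (x * v - v * x) + (y * v - v * y)"
      by (simp add: algebra_simps)
    then show ?case using add by (simp add: closed_add)
  next
    case (mult x y)
    have "(x * y) * v - v * (x * y) = x * (y * v - v * y) + (x * v - v * x) * y"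
      by (simp add: algebra_simps)
    then show ?case using mult by (simp add: closed_add closed_mult)
  qed
  have "g * v - v * g \<in> K" if "g \<in> S" for g
    using closed_uminus[OF gen_case[OF v gens[OF _ that]]] by simp
  then show ?thesis by (rule gen_case[OF u])
qed

text \<open>For a subalgebra \<open>R\<close> containing \<open>c\<close> this is the ideal of \<open>R\<close> generated by \<open>c\<close>.\<close>

inductive_set bimod_gen :: "'a::ring_1 set \<Rightarrow> 'a \<Rightarrow> 'a set" for R c where
  base: "c \<in> bimod_gen R c"
| zero: "0 \<in> bimod_gen R c"
| add: "x \<in> bimod_gen R c \<Longrightarrow> y \<in> bimod_gen R c \<Longrightarrow> x + y \<in> bimod_gen R c"
| lmult: "r \<in> R \<Longrightarrow> x \<in> bimod_gen R c \<Longrightarrow> r * x \<in> bimod_gen R c"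
| rmult: "r \<in> R \<Longrightarrow> x \<in> bimod_gen R c \<Longrightarrow> x * r \<in> bimod_gen R c"

lemma bimod_gen_uminus: "-1 \<in> R \<Longrightarrow> x \<in> bimod_gen R c \<Longrightarrow> - x \<in> bimod_gen R c"
  using bimod_gen.lmult[of "-1" R x c] by simp

section \<open>Commutators modulo two central elements\<close>

text \<open>For \<open>\<Delta>\<close> and the subalgebra \<open>\<langle>A,B\<rangle>\<close> take \<open>(X, Y, Z) = (A, B, C)\<close>, \<open>G = awC q\<close> and
  \<open>H = awA q\<close>; the other two subalgebras arise from cyclic permutations.\<close>

locale central_reduction =
  fixes X Y Z G H :: "'k::field freealg" and a b :: 'k and T :: "'k freealg set"
  assumes G_eq: "G = Z + sc a * (X * Y) - sc b * (Y * X)"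
    and H_eq: "H = X + sc a * (Y * Z) - sc b * (Z * Y)"
    and a_neq_b: "a \<noteq> b"
    and G_central: "\<And>x. G * x - x * G \<in> ideal_gen T"
    and H_central: "\<And>x. H * x - x * H \<in> ideal_gen T"
    and generated: "\<And>x. x \<in> subalg_gen {X, Y, Z}"
begin

abbreviation E :: "'k freealg" where
  "E \<equiv> sc a * (X * Y) - sc b * (Y * X)"

abbreviation M :: "'k freealg set" where
  "M \<equiv> bimod_gen (subalg_gen {X, Y}) (X * Y - Y * X)"

text \<open>\<open>K\<close> is the preimage of \<open>M\<close> in the quotient by \<open>ideal_gen T\<close>; the point of the argument
  is that it is an ideal of the whole algebra.\<close>

definition K :: "'k freealg set" where
  "K = {m + i | m i. m \<in> M \<and> i \<in> ideal_gen T}"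

lemma X_in: "X \<in> subalg_gen {X, Y}" and Y_in: "Y \<in> subalg_gen {X, Y}"
  by (simp_all add: subalg_gen.base)

lemma E_in: "E \<in> subalg_gen {X, Y}"
  by (intro subalg_gen_diff subalg_gen.mult subalg_gen.scal X_in Y_in)

lemma Z_eq: "Z = G - E"
  using G_eq by (simp add: algebra_simps)

lemma M_subset: "m \<in> M \<Longrightarrow> m \<in> subalg_gen {X, Y}"
  by (induct m rule: bimod_gen.induct)
    (auto intro: subalg_gen.add subalg_gen.mult subalg_gen_diff subalg_gen_zero X_in Y_in)

lemma M_uminus: "m \<in> M \<Longrightarrow> - m \<in> M"
  by (rule bimod_gen_uminus[OF subalg_gen_minus_one])

lemma M_commutator:
  assumes "s \<in> subalg_gen {X, Y}" "t \<in> subalg_gen {X, Y}"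
  shows "s * t - t * s \<in> M"
proof (rule subalg_gen_commutator[OF assms])
  fix g h assume "g \<in> {X, Y}" "h \<in> {X, Y}"
  then show "g * h - h * g \<in> M"
    using bimod_gen.base M_uminus[OF bimod_gen.base] by (auto intro: bimod_gen.zero)
qed (auto intro: bimod_gen.intros M_uminus)

lemma K_intro: "m \<in> M \<Longrightarrow> i \<in> ideal_gen T \<Longrightarrow> m + i \<in> K"
  unfolding K_def by blast

lemma ideal_subset_K: "i \<in> ideal_gen T \<Longrightarrow> i \<in> K"
  using K_intro[OF bimod_gen.zero] by simp

lemma M_subset_K: "m \<in> M \<Longrightarrow> m \<in> K"
  using K_intro[OF _ ideal_gen.zero] by simp

lemma K_add:
  assumes "x \<in> K" "y \<in> K"
  shows "x + y \<in> K"
proof -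
  obtain m i m' i' where "x = m + i" "y = m' + i'" "m \<in> M" "m' \<in> M"
    "i \<in> ideal_gen T" "i' \<in> ideal_gen T"
    using assms unfolding K_def by blast
  moreover have "x + y = (m + m') + (i + i')" using \<open>x = m + i\<close> \<open>y = m' + i'\<close> by simp
  ultimately show ?thesis by (metis K_intro bimod_gen.add ideal_gen.add)
qed

lemma K_uminus:
  assumes "x \<in> K"
  shows "- x \<in> K"
proof -
  obtain m i where "x = m + i" "m \<in> M" "i \<in> ideal_gen T"
    using assms unfolding K_def by blast
  moreover have "- x = - m + - i" using \<open>x = m + i\<close> by simp
  ultimately show ?thesis by (metis K_intro M_uminus ideal_gen_uminus)
qed

lemma K_diff: "x \<in> K \<Longrightarrow> y \<in> K \<Longrightarrow> x - y \<in> K"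
  using K_add[OF _ K_uminus] by (simp only: diff_conv_add_uminus)

lemma K_mult_XY:
  assumes "s \<in> subalg_gen {X, Y}" "x \<in> K"
  shows "s * x \<in> K" and "x * s \<in> K"
proof -
  obtain m i where "x = m + i" "m \<in> M" "i \<in> ideal_gen T"
    using assms(2) unfolding K_def by blast
  then show "s * x \<in> K" "x * s \<in> K"
    using assms(1) by (simp_all add: distrib_left distrib_right K_intro
        bimod_gen.lmult bimod_gen.rmult ideal_gen.lmult ideal_gen.rmult)
qed

lemma sc_mult_K: "x \<in> K \<Longrightarrow> sc c * x \<in> K"
  by (rule K_mult_XY(1)[OF subalg_gen.scal])

text \<open>Expanding \<open>[H,X]\<close> with \<open>Z = G - E\<close> writes \<open>(a - b)\<cdot>G[Y,X]\<close> as a combination of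
  commutators with \<open>G\<close> and \<open>H\<close> and of commutators inside \<open>\<langle>X,Y\<rangle>\<close>; this is where \<open>a \<noteq> b\<close>
  enters.\<close>

lemma commutator_XY_mult_G: "(X * Y - Y * X) * G \<in> K"
proof -
  define D where "D = G * (Y * X - X * Y)"
  have "sc (a - b) * D = (H * X - X * H)
      - sc a * (X * (Y * E) - (Y * E) * X) - sc b * ((E * Y) * X - X * (E * Y))
      + sc a * ((G * Y - Y * G) * X) - sc a * (G * (X * Y) - (X * Y) * G)
      + sc b * ((G * X - X * G) * Y)"
    unfolding D_def G_eq H_eq sc_diff
    by (simp add: algebra_simps sc_mult_sc mult_sc_left_commute[where x = X]
        mult_sc_left_commute[where x = Y] mult_sc_left_commute[where x = Z])
  also have "\<dots> \<in> K"
    by (intro K_add K_diff sc_mult_K ideal_subset_K M_subset_K M_commutator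
        ideal_gen.rmult G_central H_central subalg_gen.mult X_in Y_in E_in)
  finally have "sc (1 / (a - b)) * (sc (a - b) * D) \<in> K"
    by (rule sc_mult_K)
  then have "D \<in> K"
    using a_neq_b by (simp add: sc_mult_sc)
  moreover have "(X * Y - Y * X) * G = - D - (G * (X * Y - Y * X) - (X * Y - Y * X) * G)"
    unfolding D_def by (simp add: algebra_simps)
  ultimately show ?thesis
    by (metis K_diff K_uminus G_central ideal_subset_K)
qed

lemma M_mult_G: "m \<in> M \<Longrightarrow> m * G \<in> K"
proof (induct m rule: bimod_gen.induct)
  case base then show ?case by (rule commutator_XY_mult_G)
next
  case zero then show ?case by (simp add: M_subset_K bimod_gen.zero)
next
  case (add x y) then show ?case by (simp add: distrib_right K_add)
next
  case (lmult s x) then show ?case by (simp add: mult.assoc K_mult_XY)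
next
  case (rmult s x)
  have "(x * s) * G = (x * G) * s - x * (G * s - s * G)"
    by (simp add: algebra_simps)
  then show ?case
    using rmult by (metis K_diff K_mult_XY(2) ideal_subset_K ideal_gen.lmult G_central)
qed

lemma K_mult_G:
  assumes "x \<in> K"
  shows "x * G \<in> K"
proof -
  obtain m i where "x = m + i" "m \<in> M" "i \<in> ideal_gen T"
    using assms unfolding K_def by blast
  then show ?thesis
    by (simp add: distrib_right K_add M_mult_G ideal_subset_K ideal_gen.rmult)
qed

lemma G_mult_K:
  assumes "x \<in> K"
  shows "G * x \<in> K"
proof -
  have "G * x = x * G + (G * x - x * G)" by simp
  then show ?thesis by (metis K_add K_mult_G[OF assms] ideal_subset_K G_central)
qed

lemma K_mult_left: "x \<in> K \<Longrightarrow> u * x \<in> K"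
proof (rule subalg_gen_mult_left_closed[OF generated])
  fix g y assume "g \<in> {X, Y, Z}" "y \<in> K"
  moreover have "Z * y = G * y - E * y"
    unfolding Z_eq by (rule left_diff_distrib)
  ultimately show "g * y \<in> K"
    using K_diff[OF G_mult_K K_mult_XY(1)[OF E_in]] by (auto intro: K_mult_XY X_in Y_in)
qed (simp_all add: sc_mult_K K_add)

lemma K_mult_right: "x \<in> K \<Longrightarrow> x * u \<in> K"
proof (rule subalg_gen_mult_right_closed[OF generated])
  fix g y assume "g \<in> {X, Y, Z}" "y \<in> K"
  moreover have "y * Z = y * G - y * E"
    unfolding Z_eq by (rule right_diff_distrib)
  ultimately show "y * g \<in> K"
    using K_diff[OF K_mult_G K_mult_XY(2)[OF E_in]] by (auto intro: K_mult_XY X_in Y_in)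
qed (simp_all add: sc_commute[symmetric] sc_mult_K K_add)

lemma commutator_Z: "s \<in> subalg_gen {X, Y} \<Longrightarrow> Z * s - s * Z \<in> K"
proof -
  assume s: "s \<in> subalg_gen {X, Y}"
  have "Z * s - s * Z = (G * s - s * G) - (E * s - s * E)"
    unfolding Z_eq by (simp add: algebra_simps)
  then show ?thesis
    by (metis K_diff ideal_subset_K G_central M_subset_K M_commutator E_in s)
qed

lemma commutator_in_K: "u * v - v * u \<in> K"
proof (rule subalg_gen_commutator[OF generated generated])
  fix g h assume g: "g \<in> {X, Y, Z}" and h: "h \<in> {X, Y, Z}"
  show "g * h - h * g \<in> K"
  proof (cases "g = Z \<or> h = Z")
    case True
    with g h X_in Y_in show ?thesis
      using commutator_Z K_uminus[OF commutator_Z] ideal_subset_K[OF ideal_gen.zero]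
      by (elim disjE insertE) (auto simp: minus_diff_eq)
  next
    case False
    with g h show ?thesis by (auto intro: M_subset_K M_commutator X_in Y_in)
  qed
qed (auto intro: K_add K_uminus K_mult_left K_mult_right ideal_subset_K ideal_gen.zero)

lemma comm_ideal_subset:
  "j \<in> comm_ideal \<Longrightarrow> \<exists>s i. j = s + i \<and> s \<in> subalg_gen {X, Y} \<and> i \<in> ideal_gen T"
proof -
  assume "j \<in> comm_ideal"
  then have "j \<in> K"
    by (induct j rule: ideal_gen.induct)
      (auto intro: commutator_in_K ideal_subset_K ideal_gen.zero K_add K_mult_left K_mult_right)
  then show ?thesis
    unfolding K_def by (auto intro: M_subset)
qed

end

section \<open>Abelianization\<close>

instantiation gen :: linorder
begin

fun gen_rank :: "gen \<Rightarrow> nat" where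
  "gen_rank GA = 0" | "gen_rank GB = 1" | "gen_rank GC = 2"

definition less_eq_gen :: "gen \<Rightarrow> gen \<Rightarrow> bool" where
  "less_eq_gen x y = (gen_rank x \<le> gen_rank y)"

definition less_gen :: "gen \<Rightarrow> gen \<Rightarrow> bool" where
  "less_gen x y = (gen_rank x < gen_rank y)"

instance
proof
  fix x y z :: gen
  show "x \<le> y \<Longrightarrow> y \<le> x \<Longrightarrow> x = y"
    by (cases x; cases y; simp add: less_eq_gen_def)
qed (auto simp: less_eq_gen_def less_gen_def)

end

fun letters :: "word \<Rightarrow> gen list" where
  "letters (W l) = l"

definition lists_of_mset :: "gen multiset \<Rightarrow> gen list set" where
  "lists_of_mset m = {l. mset l = m}"

lemma finite_lists_of_mset: "finite (lists_of_mset m)"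
proof -
  have "lists_of_mset m \<subseteq> {l. set l \<subseteq> set_mset m \<and> length l = size m}"
    unfolding lists_of_mset_def by auto
  then show ?thesis using finite_lists_length_eq[OF finite_set_mset] by (rule finite_subset)
qed

text \<open>Values lie in the commutative polynomial ring, whose monomials are multisets of generators.\<close>

definition abelianize :: "'k::field freealg \<Rightarrow> (gen multiset \<Rightarrow>\<^sub>0 'k)" where
  "abelianize x = Abs_poly_mapping (\<lambda>m. \<Sum>l\<in>lists_of_mset m. Poly_Mapping.lookup x (W l))"

lemma lookup_abelianize:
  "Poly_Mapping.lookup (abelianize x) m = (\<Sum>l\<in>lists_of_mset m. Poly_Mapping.lookup x (W l))"
proof -
  have "{m. (\<Sum>l\<in>lists_of_mset m. Poly_Mapping.lookup x (W l)) \<noteq> 0}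
      \<subseteq> (\<lambda>w. mset (letters w)) ` Poly_Mapping.keys x"
  proof
    fix m assume "m \<in> {m. (\<Sum>l\<in>lists_of_mset m. Poly_Mapping.lookup x (W l)) \<noteq> 0}"
    then obtain l where "l \<in> lists_of_mset m" "Poly_Mapping.lookup x (W l) \<noteq> 0"
      by (auto elim: sum.not_neutral_contains_not_neutral)
    then show "m \<in> (\<lambda>w. mset (letters w)) ` Poly_Mapping.keys x"
      by (auto simp: lists_of_mset_def in_keys_iff intro!: image_eqI[of _ _ "W l"])
  qed
  then have "finite {m. (\<Sum>l\<in>lists_of_mset m. Poly_Mapping.lookup x (W l)) \<noteq> 0}"
    by (rule finite_subset) simp
  then show ?thesis unfolding abelianize_def by simp
qed

lemma abelianize_add: "abelianize (x + y) = abelianize x + abelianize y"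
  by (rule poly_mapping_eqI) (simp add: lookup_abelianize lookup_add sum.distrib)

lemma abelianize_zero: "abelianize 0 = 0"
  by (rule poly_mapping_eqI) (simp add: lookup_abelianize)

lemma abelianize_diff: "abelianize (x - y) = abelianize x - abelianize y"
  using abelianize_add[of "x - y" y] by (simp add: eq_diff_eq)

lemma abelianize_single:
  "abelianize (Poly_Mapping.single (W l) c) = Poly_Mapping.single (mset l) c"
proof (rule poly_mapping_eqI)
  fix m
  have "(\<Sum>l'\<in>lists_of_mset m. Poly_Mapping.lookup (Poly_Mapping.single (W l) c) (W l'))
      = (\<Sum>l'\<in>lists_of_mset m. if l' = l then c else 0)"
    by (intro sum.cong) (auto simp: lookup_single when_def)
  also have "\<dots> = (if mset l = m then c else 0)"
    using finite_lists_of_mset by (simp add: lists_of_mset_def)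
  finally show "Poly_Mapping.lookup (abelianize (Poly_Mapping.single (W l) c)) m
      = Poly_Mapping.lookup (Poly_Mapping.single (mset l) c) m"
    by (simp add: lookup_abelianize lookup_single when_def)
qed

lemma abelianize_mult: "abelianize (x * y) = abelianize x * abelianize y"
proof (induct x rule: poly_mapping_single_induct)
  case zero then show ?case by (simp add: abelianize_zero)
next
  case (add x1 x2) then show ?case by (simp add: distrib_right abelianize_add)
next
  case (single w c)
  show ?case
  proof (induct y rule: poly_mapping_single_induct)
    case zero then show ?case by (simp add: abelianize_zero)
  next
    case (add y1 y2) then show ?case by (simp add: distrib_left abelianize_add)
  next
    case (single v d)
    show ?case by (cases w; cases v) (simp add: mult_single abelianize_single)
  qed
qed

lemma abelianize_comm_ideal: "j \<in> comm_ideal \<Longrightarrow> abelianize j = 0"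
  by (induct j rule: ideal_gen.induct)
    (auto simp: abelianize_diff abelianize_mult abelianize_add abelianize_zero mult.commute)

text \<open>\<open>sort_words x\<close> replaces every word of \<open>x\<close> by its sorted rearrangement.\<close>

definition sort_words :: "'k::field freealg \<Rightarrow> 'k freealg" where
  "sort_words x = Abs_poly_mapping (\<lambda>w.
     if sorted (letters w) then Poly_Mapping.lookup (abelianize x) (mset (letters w)) else 0)"

lemma lookup_sort_words: "Poly_Mapping.lookup (sort_words x) w =
    (if sorted (letters w) then Poly_Mapping.lookup (abelianize x) (mset (letters w)) else 0)"
proof -
  have "{w. (if sorted (letters w) then Poly_Mapping.lookup (abelianize x) (mset (letters w)) else 0) \<noteq> 0}
      \<subseteq> (\<lambda>m. W (sorted_list_of_multiset m)) ` Poly_Mapping.keys (abelianize x)"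
  proof
    fix w
    assume w: "w \<in> {w. (if sorted (letters w)
        then Poly_Mapping.lookup (abelianize x) (mset (letters w)) else 0) \<noteq> 0}"
    obtain l where "w = W l" by (cases w)
    with w show "w \<in> (\<lambda>m. W (sorted_list_of_multiset m)) ` Poly_Mapping.keys (abelianize x)"
      by (auto simp: in_keys_iff sorted_sort_id split: if_splits intro!: image_eqI[of _ _ "mset l"])
  qed
  then have "finite {w. (if sorted (letters w)
      then Poly_Mapping.lookup (abelianize x) (mset (letters w)) else 0) \<noteq> 0}"
    by (rule finite_subset) simp
  then show ?thesis unfolding sort_words_def by simp
qed

lemma sort_words_zero: "sort_words 0 = 0"
  by (rule poly_mapping_eqI) (simp add: lookup_sort_words abelianize_zero)

lemma sort_words_add: "sort_words (x + y) = sort_words x + sort_words y"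
  by (rule poly_mapping_eqI) (simp add: lookup_sort_words lookup_add abelianize_add)

lemma sort_words_single: "sort_words (Poly_Mapping.single (W l) c) = Poly_Mapping.single (W (sort l)) c"
proof (rule poly_mapping_eqI)
  fix w
  obtain l' where w: "w = W l'" by (cases w)
  have "(sorted l' \<and> mset l = mset l') = (sort l = l')"
    by (metis mset_sort properties_for_sort sorted_sort)
  then show "Poly_Mapping.lookup (sort_words (Poly_Mapping.single (W l) c)) w
      = Poly_Mapping.lookup (Poly_Mapping.single (W (sort l)) c) w"
    unfolding w lookup_sort_words abelianize_single by (auto simp: lookup_single when_def)
qed

lemma word_monom_insort:
  "word_monom (g # l) - word_monom (insort g l) \<in> (comm_ideal :: 'k::field freealg set)"
proof (induct l)
  case Nil then show ?case by (simp add: ideal_gen.zero)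
next
  case (Cons h l)
  show ?case
  proof (cases "g \<le> h")
    case True then show ?thesis by (simp add: ideal_gen.zero)
  next
    case False
    have "word_monom (g # h # l) - word_monom (h # insort g l) =
        (word_monom [g] * word_monom [h] - word_monom [h] * word_monom [g]) * word_monom l
        + word_monom [h] * (word_monom (g # l) - word_monom (insort g l) :: 'k freealg)"
      by (simp add: word_monom_Cons[of g "h # l"] word_monom_Cons[of h l]
          word_monom_Cons[of h "insort g l"] word_monom_Cons[of g l] algebra_simps)
    also have "\<dots> \<in> comm_ideal"
      by (rule ideal_gen.add[OF ideal_gen.rmult ideal_gen.lmult[OF Cons]]) (blast intro: ideal_gen.base)
    finally show ?thesis using False by simp
  qed
qed

lemma word_monom_sort: "word_monom l - word_monom (sort l) \<in> (comm_ideal :: 'k::field freealg set)"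
proof (induct l)
  case Nil then show ?case by (simp add: ideal_gen.zero)
next
  case (Cons g l)
  have "word_monom (g # l) - word_monom (insort g (sort l)) =
      word_monom [g] * (word_monom l - word_monom (sort l))
      + (word_monom (g # sort l) - word_monom (insort g (sort l)) :: 'k freealg)"
    by (simp add: word_monom_Cons[of g l] word_monom_Cons[of g "sort l"] algebra_simps)
  also have "\<dots> \<in> comm_ideal"
    using ideal_gen.lmult[OF Cons] word_monom_insort by (rule ideal_gen.add)
  finally show ?case by simp
qed

lemma sort_words_congruent: "x - sort_words x \<in> comm_ideal"
proof (induct x rule: poly_mapping_single_induct)
  case zero then show ?case by (simp add: sort_words_zero ideal_gen.zero)
next
  case (add x y)
  have "(x + y) - sort_words (x + y) = (x - sort_words x) + (y - sort_words y)"
    by (simp add: sort_words_add)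
  then show ?case using ideal_gen.add[OF add] by (simp only:)
next
  case (single w c)
  obtain l where w: "w = W l" by (cases w)
  have "Poly_Mapping.single w c - sort_words (Poly_Mapping.single w c)
      = sc c * (word_monom l - word_monom (sort l))"
    unfolding w sort_words_single by (simp add: single_W_eq right_diff_distrib)
  also have "\<dots> \<in> comm_ideal"
    by (rule ideal_gen.lmult[OF word_monom_sort])
  finally show ?case .
qed

lemma sort_words_constant:
  assumes "\<And>m. m \<noteq> {#} \<Longrightarrow> Poly_Mapping.lookup (abelianize x) m = 0"
  shows "sort_words x = sc (Poly_Mapping.lookup (abelianize x) {#})"
proof (rule poly_mapping_eqI)
  fix w
  obtain l where w: "w = W l" by (cases w)
  show "Poly_Mapping.lookup (sort_words x) w = Poly_Mapping.lookup (sc (Poly_Mapping.lookup (abelianize x) {#})) w"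
    by (cases "l = []") (simp_all add: w lookup_sort_words sc_def assms lookup_single zero_word_def when_def)
qed

definition letter_free :: "gen \<Rightarrow> 'k::field freealg \<Rightarrow> bool" where
  "letter_free g x \<longleftrightarrow> (\<forall>w\<in>Poly_Mapping.keys x. g \<notin> set (letters w))"

lemma letter_free_gens [simp]:
  "letter_free g genA \<longleftrightarrow> g \<noteq> GA" "letter_free g genB \<longleftrightarrow> g \<noteq> GB"
  "letter_free g genC \<longleftrightarrow> g \<noteq> GC"
  by (auto simp: letter_free_def genA_def genB_def genC_def)

lemma subalg_gen_letter_free:
  assumes "x \<in> subalg_gen S" "\<forall>s\<in>S. letter_free g s"
  shows "letter_free g x"
  using assms unfolding letter_free_def
proof (induct x rule: subalg_gen.induct)
  case (scal c) then show ?case by (auto simp: sc_def zero_word_def split: if_splits)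
next
  case (add x y) then show ?case using keys_add[of x y] by blast
next
  case (mult x y)
  have letters_plus: "letters (v + w) = letters v @ letters w" for v w
    by (cases v; cases w) simp
  show ?case
  proof
    fix w assume "w \<in> Poly_Mapping.keys (x * y)"
    then obtain u v where "w = u + v" "u \<in> Poly_Mapping.keys x" "v \<in> Poly_Mapping.keys y"
      using keys_mult[of x y] by blast
    then show "g \<notin> set (letters w)" using mult by (auto simp: letters_plus)
  qed
qed blast

lemma lookup_abelianize_letter_free:
  assumes "letter_free g x" "g \<in># m"
  shows "Poly_Mapping.lookup (abelianize x) m = 0"
  unfolding lookup_abelianize
proof (intro sum.neutral ballI)
  fix l assume "l \<in> lists_of_mset m"
  with assms have "W l \<notin> Poly_Mapping.keys x" by (force simp: letter_free_def lists_of_mset_def)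
  then show "Poly_Mapping.lookup x (W l) = 0" by (simp add: in_keys_iff)
qed

section \<open>The universal Askey--Wilson algebra\<close>

lemma AW_ideal_subset_comm_ideal: "AW_ideal q \<subseteq> comm_ideal"
  unfolding AW_ideal_def by (rule ideal_gen_mono) blast

lemma AW_coeffs_neq:
  fixes q :: "'k::field"
  assumes "q \<noteq> 0" "q ^ 4 \<noteq> 1"
  shows "q / (q^2 - inverse (q^2)) \<noteq> inverse q / (q^2 - inverse (q^2))"
proof -
  have q4: "q ^ 4 = q^2 * q^2" by algebra
  have "q^2 - inverse (q^2) \<noteq> 0"
  proof
    assume "q^2 - inverse (q^2) = 0"
    then have "q ^ 4 = q^2 * inverse (q^2)" unfolding q4 by simp
    also have "\<dots> = 1" using assms(1) by simp
    finally show False using assms(2) by blast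
  qed
  moreover have "q \<noteq> inverse q"
  proof
    assume "q = inverse q"
    then have "q^2 = q * inverse q" by (simp add: power2_eq_square)
    then have "q^2 = 1" using assms(1) by simp
    then have "q ^ 4 = 1" unfolding q4 by simp
    then show False using assms(2) by blast
  qed
  ultimately show ?thesis by simp
qed

lemma AW_central_reduction:
  fixes q :: "'k::field"
  assumes "q \<noteq> 0" "q ^ 4 \<noteq> 1"
  defines "a \<equiv> q / (q^2 - inverse (q^2))" and "b \<equiv> inverse q / (q^2 - inverse (q^2))"
    and "T \<equiv> {\<alpha> * x - x * \<alpha> | \<alpha> x. \<alpha> \<in> {awA q, awB q, awC q}}"
  shows "central_reduction genA genB genC (awC q) (awA q) a b T"
    and "central_reduction genB genC genA (awA q) (awB q) a b T"
    and "central_reduction genC genA genB (awB q) (awC q) a b T"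
proof -
  have "a \<noteq> b" unfolding a_def b_def by (rule AW_coeffs_neq[OF assms(1,2)])
  moreover have "\<alpha> * x - x * \<alpha> \<in> ideal_gen T" if "\<alpha> \<in> {awA q, awB q, awC q}" for \<alpha> x
    using that unfolding T_def by (blast intro: ideal_gen.base)
  moreover have "x \<in> subalg_gen {genA, genB, genC}" "x \<in> subalg_gen {genB, genC, genA}"
    "x \<in> subalg_gen {genC, genA, genB}" for x :: "'k freealg"
    using subalg_gen_genA_genB_genC by (simp_all add: insert_commute)
  ultimately show "central_reduction genA genB genC (awC q) (awA q) a b T"
    and "central_reduction genB genC genA (awA q) (awB q) a b T"
    and "central_reduction genC genA genB (awB q) (awC q) a b T"
    by (unfold_locales; simp add: awA_def awB_def awC_def a_def b_def mult.assoc)+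
qed

lemma comm_ideal_plus_scalars_subset_lift:
  assumes "central_reduction X Y Z G H a b T" "AW_ideal q = ideal_gen T"
  shows "comm_ideal_plus_scalars q \<subseteq> lift q (subalg_gen {X, Y})"
proof
  fix x assume "x \<in> comm_ideal_plus_scalars q"
  then obtain j c i where x: "x = j + sc c + i" "j \<in> comm_ideal" "i \<in> ideal_gen T"
    unfolding comm_ideal_plus_scalars_def lift_def assms(2) by blast
  obtain s i' where "j = s + i'" "s \<in> subalg_gen {X, Y}" "i' \<in> ideal_gen T"
    using central_reduction.comm_ideal_subset[OF assms(1) x(2)] by blast
  then have "x = (s + sc c) + (i' + i)" "s + sc c \<in> subalg_gen {X, Y}" "i' + i \<in> ideal_gen T"
    using x by (simp_all add: algebra_simps subalg_gen.add subalg_gen.scal ideal_gen.add)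
  then show "x \<in> lift q (subalg_gen {X, Y})"
    unfolding lift_def assms(2) by blast
qed

lemma lookup_abelianize_lift_letter_free:
  assumes "x \<in> lift q (subalg_gen S)" "\<forall>s\<in>S. letter_free g s" "g \<in># m"
  shows "Poly_Mapping.lookup (abelianize x) m = 0"
proof -
  obtain y i where "x = y + i" "y \<in> subalg_gen S" "i \<in> AW_ideal q"
    using assms(1) unfolding lift_def by blast
  moreover have "abelianize i = 0"
    using \<open>i \<in> AW_ideal q\<close> AW_ideal_subset_comm_ideal by (blast intro: abelianize_comm_ideal)
  ultimately show ?thesis
    using lookup_abelianize_letter_free[OF subalg_gen_letter_free[OF _ assms(2)] assms(3)]
    by (simp add: abelianize_add)
qed

lemma inter_lift_subset_comm_ideal_plus_scalars:
  "lift q (subalg_gen {genA, genB}) \<inter> lift q (subalg_gen {genB, genC})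
     \<inter> lift q (subalg_gen {genA, genC}) \<subseteq> comm_ideal_plus_scalars (q :: 'k::field)"
proof
  fix x :: "'k freealg"
  assume x: "x \<in> lift q (subalg_gen {genA, genB}) \<inter> lift q (subalg_gen {genB, genC})
     \<inter> lift q (subalg_gen {genA, genC})"
  have "Poly_Mapping.lookup (abelianize x) m = 0" if "m \<noteq> {#}" for m
  proof -
    obtain g where "g \<in># m" using \<open>m \<noteq> {#}\<close> by (metis multiset_nonemptyE)
    with x show ?thesis
      by (cases g) (auto intro: lookup_abelianize_lift_letter_free)
  qed
  then have "sort_words x = sc (Poly_Mapping.lookup (abelianize x) {#})"
    by (rule sort_words_constant)
  then have "x = ((x - sort_words x) + sc (Poly_Mapping.lookup (abelianize x) {#})) + 0"
    by simp
  then show "x \<in> comm_ideal_plus_scalars q"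
    unfolding comm_ideal_plus_scalars_def lift_def AW_ideal_def
    using sort_words_congruent ideal_gen.zero by blast
qed

theorem theorem11p15:
  fixes q :: "'k::field"
  assumes "q \<noteq> 0" and "q ^ 4 \<noteq> 1"
  shows "comm_ideal_plus_scalars q =
           lift q (subalg_gen {genA, genB}) \<inter> lift q (subalg_gen {genB, genC})
             \<inter> lift q (subalg_gen {genA, genC})"
proof
  note subset_lift = comm_ideal_plus_scalars_subset_lift[OF _ AW_ideal_def]
  have "comm_ideal_plus_scalars q \<subseteq> lift q (subalg_gen {genA, genB})"
    and "comm_ideal_plus_scalars q \<subseteq> lift q (subalg_gen {genB, genC})"
    and "comm_ideal_plus_scalars q \<subseteq> lift q (subalg_gen {genC, genA})"
    by (rule subset_lift[OF AW_central_reduction(1)[OF assms]]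
        subset_lift[OF AW_central_reduction(2)[OF assms]]
        subset_lift[OF AW_central_reduction(3)[OF assms]])+
  then show "comm_ideal_plus_scalars q \<subseteq> lift q (subalg_gen {genA, genB})
      \<inter> lift q (subalg_gen {genB, genC}) \<inter> lift q (subalg_gen {genA, genC})"
    by (simp add: insert_commute)
qed (rule inter_lift_subset_comm_ideal_plus_scalars)

end
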